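(* Let $A,B\in\mathbb{N}$ with $A\ge B$ and let $p\in[0,1]$. For $i\in\{1,\dots,B\}$ let $X_i\sim\mathrm{Bin}(A-i,p)$. Then $i\mapsto \mathbb{P}(X_i\ge B-i)$ is a (non-strictly) increasing function on $\{1,\dots,B\}$.
   Context: $\mathrm{Bin}(n,p)$ denotes the binomial distribution with $n$ trials and success probability $p$. *)

theory Defs
  imports "HOL-Probability.Probability"
begin

end

theory Submission
  imports Defs
begin

text \<open>Coupling: a \<open>Bin(n+1, p)\<close> variable is a \<open>Bin(n, p)\<close> variable plus an independent
  Bernoulli trial, so it reaches \<open>k + 1\<close> only if the \<open>Bin(n, p)\<close> part already reaches \<open>k\<close>.
  Reading the theorem with \<open>j = B - i\<close>, the probabilities are \<open>P(Bin(A - B + j, p) \<ge> j)\<close>,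
  which therefore decrease in \<open>j\<close>.\<close>

lemma prob_binomial_pmf_atLeast_Suc_le:
  fixes p :: real
  assumes "0 \<le> p" "p \<le> 1"
  shows "measure_pmf.prob (binomial_pmf (Suc n) p) {Suc k..}
         \<le> measure_pmf.prob (binomial_pmf n p) {k..}"
proof -
  let ?shift = "\<lambda>b m. (if b then 1 else 0) + m"
  let ?E = "emeasure (measure_pmf (binomial_pmf n p)) {k..}"
  have split: "binomial_pmf (Suc n) p
      = bernoulli_pmf p \<bind> (\<lambda>b. map_pmf (?shift b) (binomial_pmf n p))"
    using assms by (simp add: binomial_pmf_Suc map_pmf_def)
  have shifted_le: "emeasure (measure_pmf (map_pmf (?shift b) (binomial_pmf n p))) {Suc k..} \<le> ?E"
    for b
  proof -
    have "emeasure (measure_pmf (map_pmf (?shift b) (binomial_pmf n p))) {Suc k..}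
        = emeasure (measure_pmf (binomial_pmf n p)) (?shift b -` {Suc k..})"
      by (simp add: emeasure_map_pmf)
    also have "\<dots> \<le> ?E"
      by (rule emeasure_mono) auto
    finally show ?thesis .
  qed
  have "emeasure (measure_pmf (binomial_pmf (Suc n) p)) {Suc k..}
      = (\<integral>\<^sup>+b. emeasure (measure_pmf (map_pmf (?shift b) (binomial_pmf n p))) {Suc k..}
          \<partial>bernoulli_pmf p)"
    by (subst split) simp
  also have "\<dots> \<le> (\<integral>\<^sup>+b. ?E \<partial>bernoulli_pmf p)"
    by (rule nn_integral_mono) (rule shifted_le)
  also have "\<dots> = ?E"
    by (simp add: measure_pmf.emeasure_space_1)
  finally show ?thesis
    by (simp add: measure_pmf.emeasure_eq_measure)
qed

lemma prob_binomial_pmf_add_atLeast_antimono: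
  fixes p :: real
  assumes "0 \<le> p" "p \<le> 1" and "j \<le> j'"
  shows "measure_pmf.prob (binomial_pmf (m + j') p) {j'..}
         \<le> measure_pmf.prob (binomial_pmf (m + j) p) {j..}"
  using lift_Suc_antimono_le[where f = "\<lambda>j. measure_pmf.prob (binomial_pmf (m + j) p) {j..}"]
    prob_binomial_pmf_atLeast_Suc_le[OF assms(1,2)] assms(3)
  by simp

theorem lemma7:
  fixes A B :: nat and p :: real
  assumes "B \<le> A" and "0 \<le> p" and "p \<le> 1"
  shows "mono_on {1..B}
           (\<lambda>i. measure_pmf.prob (binomial_pmf (A - i) p) {B - i..})"
proof (rule mono_onI)
  fix r s :: nat
  assume "r \<in> {1..B}" "s \<in> {1..B}" "r \<le> s"
  then have "A - r = (A - B) + (B - r)" "A - s = (A - B) + (B - s)" "B - s \<le> B - r"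
    using \<open>B \<le> A\<close> by auto
  then show "measure_pmf.prob (binomial_pmf (A - r) p) {B - r..}
      \<le> measure_pmf.prob (binomial_pmf (A - s) p) {B - s..}"
    using prob_binomial_pmf_add_atLeast_antimono[OF assms(2,3)] by simp
qed

end
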